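(* The family $\mathcal D_n$ of derangements of $[n]$ is $\left(\frac n{12},\frac n4\right)$-spread.
   Context: A derangement is a permutation of $[n]$ without fixed points; each permutation is identified with its graph $\{(i,\sigma(i)):i\in[n]\}\subset[n]^2$. For a family $\mathcal{F}$ of subsets of $[n]^2$ and $X\subset[n]^2$, $\mathcal{F}(X):=\{F\setminus X: X\subset F\in\mathcal{F}\}$. $\mathcal{F}$ is $r$-spread if $|\mathcal{F}(X)|\le r^{-|X|}|\mathcal{F}|$ for all $X$, and $(r,q)$-spread if $\mathcal{F}(A)$ is $r$-spread for every $A\subset[n]^2$ with $|A|\le q$. *)

theory Defs
  imports "HOL-Combinatorics.Permutations" Complex_Main
begin

definition graph_on :: "nat \<Rightarrow> (nat \<Rightarrow> nat) \<Rightarrow> (nat \<times> nat) set" where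
  "graph_on n \<sigma> = {(i, \<sigma> i) | i. i \<in> {1..n}}"

definition derangements :: "nat \<Rightarrow> (nat \<times> nat) set set" where
  "derangements n = {graph_on n \<sigma> | \<sigma>. \<sigma> permutes {1..n} \<and> (\<forall>i\<in>{1..n}. \<sigma> i \<noteq> i)}"

definition restr :: "'a set set \<Rightarrow> 'a set \<Rightarrow> 'a set set" where
  "restr \<F> X = {F - X | F. F \<in> \<F> \<and> X \<subseteq> F}"

definition r_spread :: "real \<Rightarrow> 'a set set \<Rightarrow> bool" where
  "r_spread r \<F> \<longleftrightarrow> (\<forall>X. real (card (restr \<F> X)) \<le> (inverse r) ^ card X * real (card \<F>))"

definition rq_spread :: "'a set \<Rightarrow> real \<Rightarrow> real \<Rightarrow> 'a set set \<Rightarrow> bool" where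
  "rq_spread V r q \<F> \<longleftrightarrow> (\<forall>A. A \<subseteq> V \<and> real (card A) \<le> q \<longrightarrow> r_spread r (restr \<F> A))"

end

theory Submission
  imports Defs
begin

text \<open>
  Let c(B) be the number of derangements whose graph contains B. Given such a derangement
  \<sigma> for B \<union> {(i, j)}, composing \<sigma> with the transposition (i r), for any of the at least
  n - |B| - 3 admissible r, gives a derangement whose graph contains B but not (i, j), and
  \<sigma> and r can be read off from the result. Hence (n - |B|) c(B \<union> {(i, j)}) \<le> 3 c(B).
  Adding the k elements of X to A one at a time gives c(A \<union> X) (N)_k \<le> 3^k c(A), where
  N = n - |A| \<ge> 3n/4 and (N)_k = N (N - 1) ... (N - k + 1). Since (N)_k \<ge> (N/e)^k, this
  yields c(A \<union> X) \<le> (12/n)^k c(A), the spread condition for the derangements restricted to A.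
\<close>

lemma card_restr:
  assumes "finite \<F>"
  shows "card (restr \<F> X) = card {F \<in> \<F>. X \<subseteq> F}"
proof -
  have "restr \<F> X = (\<lambda>F. F - X) ` {F \<in> \<F>. X \<subseteq> F}"
    by (auto simp: restr_def)
  moreover have "inj_on (\<lambda>F. F - X) {F \<in> \<F>. X \<subseteq> F}"
    by (rule inj_onI) (metis (no_types, lifting) Diff_partition mem_Collect_eq)
  ultimately show ?thesis
    by (simp add: card_image)
qed

lemma restr_restr:
  "restr (restr \<F> A) X = (if A \<inter> X = {} then restr \<F> (A \<union> X) else {})"
proof (cases "A \<inter> X = {}")
  case True
  have "restr (restr \<F> A) X = restr \<F> (A \<union> X)"
  proof (intro equalityI subsetI)
    fix Y
    assume "Y \<in> restr (restr \<F> A) X"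
    then obtain F where "F \<in> \<F>" "A \<subseteq> F" "X \<subseteq> F - A" "Y = F - A - X"
      by (auto simp: restr_def)
    then show "Y \<in> restr \<F> (A \<union> X)"
      unfolding restr_def by (intro CollectI exI[of _ F]) auto
  next
    fix Y
    assume "Y \<in> restr \<F> (A \<union> X)"
    then obtain F where "F \<in> \<F>" "A \<union> X \<subseteq> F" "Y = F - (A \<union> X)"
      by (auto simp: restr_def)
    then show "Y \<in> restr (restr \<F> A) X"
      unfolding restr_def using True by (intro CollectI exI[of _ "F - A"]) blast
  qed
  with True show ?thesis
    by simp
qed (auto simp: restr_def)

lemma plus_one_power_le_exp:
  fixes M :: real
  assumes "0 < M" "real k \<le> M"
  shows "(M + 1) ^ k \<le> exp 1 * M ^ k"
proof -
  have "(1 + 1 / M) ^ k \<le> exp (1 / M) ^ k"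
    using exp_ge_add_one_self[of "1 / M"] assms(1) by (intro power_mono) (auto simp: add.commute)
  also have "\<dots> = exp (real k / M)"
    by (simp add: exp_of_nat_mult[symmetric])
  also have "\<dots> \<le> exp 1"
    using assms by simp
  finally have "(1 + 1 / M) ^ k \<le> exp 1" .
  moreover have "(M + 1) ^ k = M ^ k * (1 + 1 / M) ^ k"
    using assms(1) by (simp add: power_mult_distrib[symmetric] field_simps)
  ultimately show ?thesis
    using assms(1) by (simp add: mult.commute)
qed

lemma power_div_exp_le_falling_product:
  "k \<le> N \<Longrightarrow> (real N / exp 1) ^ k \<le> (\<Prod>t<k. real N - real t)"
proof (induction k arbitrary: N)
  case 0
  then show ?case by simp
next
  case (Suc k)
  then have "1 \<le> N" by simp
  have split: "(\<Prod>t<Suc k. real N - real t) = real N * (\<Prod>t<k. real (N - 1) - real t)"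
    unfolding prod.lessThan_Suc_shift using \<open>1 \<le> N\<close>
    by (simp add: of_nat_diff diff_diff_eq del: prod.lessThan_Suc)
  have "real N ^ k \<le> exp 1 * real (N - 1) ^ k"
  proof (cases "k = 0")
    case False
    then have "0 < real (N - 1)" "real k \<le> real (N - 1)" using Suc.prems by auto
    from plus_one_power_le_exp[OF this] show ?thesis
      using \<open>1 \<le> N\<close> by (simp add: of_nat_diff)
  qed simp
  then have "(real N / exp 1) ^ Suc k \<le> real N * (real (N - 1) / exp 1) ^ k"
    by (simp add: power_divide field_simps mult_left_mono)
  also have "\<dots> \<le> real N * (\<Prod>t<k. real (N - 1) - real t)"
    using Suc by (intro mult_left_mono Suc.IH) auto
  finally show ?case
    using split by simp
qed

lemma compose_transpose_cancel:
  assumes "inj \<sigma>" "\<sigma> i = \<tau> i" "r \<noteq> i" "r' \<noteq> i"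
    and eq: "\<sigma> \<circ> transpose i r = \<tau> \<circ> transpose i r'"
  shows "r = r' \<and> \<sigma> = \<tau>"
proof -
  have "(\<sigma> \<circ> transpose i r) r = (\<sigma> \<circ> transpose i r) r'"
    using assms by (metis comp_apply transpose_apply_second)
  moreover have "inj (\<sigma> \<circ> transpose i r)"
    using assms(1) by (simp add: inj_compose inj_transpose)
  ultimately have "r = r'"
    by (rule injD[rotated])
  then have "\<sigma> \<circ> transpose i r \<circ> transpose i r = \<tau> \<circ> transpose i r \<circ> transpose i r"
    using eq by simp
  then show ?thesis
    using \<open>r = r'\<close> by (simp add: comp_assoc)
qed

lemma card_mult_le_card_if_inj_on_Sigma:
  assumes "finite S" "finite T"
    and "\<And>x. x \<in> S \<Longrightarrow> finite (P x)" "\<And>x. x \<in> S \<Longrightarrow> m \<le> card (P x)"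
    and "inj_on f (Sigma S P)" "f ` Sigma S P \<subseteq> T"
  shows "card S * m \<le> card T"
proof -
  have "card S * m \<le> (\<Sum>x\<in>S. card (P x))"
    using sum_mono[of S "\<lambda>_. m" "\<lambda>x. card (P x)"] assms(4) by (simp add: mult.commute)
  also have "\<dots> = card (Sigma S P)"
    using assms(1,3) by (simp add: card_SigmaI)
  also have "\<dots> \<le> card T"
    using card_inj_on_le assms(2,5,6) by blast
  finally show ?thesis .
qed

definition derangement_perms :: "nat \<Rightarrow> (nat \<Rightarrow> nat) set" where
  "derangement_perms n = {\<sigma>. \<sigma> permutes {1..n} \<and> (\<forall>i\<in>{1..n}. \<sigma> i \<noteq> i)}"

definition count_containing :: "nat \<Rightarrow> (nat \<times> nat) set \<Rightarrow> nat" where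
  "count_containing n B = card {\<sigma> \<in> derangement_perms n. B \<subseteq> graph_on n \<sigma>}"

lemma mem_graph_on_iff: "(x, y) \<in> graph_on n \<sigma> \<longleftrightarrow> x \<in> {1..n} \<and> y = \<sigma> x"
  by (auto simp: graph_on_def)

lemma graph_on_eq_image: "graph_on n \<sigma> = (\<lambda>i. (i, \<sigma> i)) ` {1..n}"
  by (auto simp: graph_on_def)

lemma finite_graph_on: "finite (graph_on n \<sigma>)"
  by (simp add: graph_on_eq_image)

lemma card_graph_on: "card (graph_on n \<sigma>) = n"
  unfolding graph_on_eq_image by (subst card_image) (auto intro: inj_onI)

lemma finite_derangement_perms: "finite (derangement_perms n)"
  unfolding derangement_perms_def
  by (rule finite_subset[OF _ finite_permutations[of "{1..n}"]]) auto

lemma inj_on_graph_on: "inj_on (graph_on n) {\<sigma>. \<sigma> permutes {1..n}}"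
proof (rule inj_onI)
  fix \<sigma> \<tau>
  assume perms: "\<sigma> \<in> {\<sigma>. \<sigma> permutes {1..n}}" "\<tau> \<in> {\<sigma>. \<sigma> permutes {1..n}}"
    and graphs: "graph_on n \<sigma> = graph_on n \<tau>"
  show "\<sigma> = \<tau>"
  proof
    fix x
    show "\<sigma> x = \<tau> x"
    proof (cases "x \<in> {1..n}")
      case True
      then have "(x, \<sigma> x) \<in> graph_on n \<tau>"
        using graphs mem_graph_on_iff by metis
      then show ?thesis
        by (simp add: mem_graph_on_iff)
    next
      case False
      then show ?thesis
        using perms by (simp add: permutes_not_in)
    qed
  qed
qed

lemma notin_fst_if_insert_subset_graph_on:
  assumes "insert (i, j) B \<subseteq> graph_on n \<sigma>" "(i, j) \<notin> B"
  shows "i \<notin> fst ` B"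
  using assms by (force simp: mem_graph_on_iff)

lemma derangements_eq_image: "derangements n = graph_on n ` derangement_perms n"
  by (auto simp: derangements_def derangement_perms_def)

lemma card_restr_derangements: "card (restr (derangements n) B) = count_containing n B"
proof -
  have "{F \<in> derangements n. B \<subseteq> F} = graph_on n ` {\<sigma> \<in> derangement_perms n. B \<subseteq> graph_on n \<sigma>}"
    by (auto simp: derangements_eq_image)
  moreover have "inj_on (graph_on n) {\<sigma> \<in> derangement_perms n. B \<subseteq> graph_on n \<sigma>}"
    using inj_on_graph_on by (rule inj_on_subset) (auto simp: derangement_perms_def)
  ultimately show ?thesis
    by (simp add: card_restr derangements_eq_image finite_derangement_perms card_image
        count_containing_def)
qed

lemma count_containing_antimono: "B \<subseteq> C \<Longrightarrow> count_containing n C \<le> count_containing n B"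
  unfolding count_containing_def
  by (rule card_mono) (auto intro: finite_subset[OF _ finite_derangement_perms])

lemma count_containing_eq_0:
  assumes "n < card C"
  shows "count_containing n C = 0"
proof -
  have "\<not> C \<subseteq> graph_on n \<sigma>" for \<sigma>
    using card_mono[OF finite_graph_on, of C n \<sigma>] assms by (auto simp: card_graph_on)
  then show ?thesis
    by (simp add: count_containing_def)
qed

text \<open>The positions r for which \<sigma> \<circ> (i r) still contains B and has no fixed point at i or r.\<close>

definition switch_positions :: "nat \<Rightarrow> (nat \<times> nat) set \<Rightarrow> (nat \<Rightarrow> nat) \<Rightarrow> nat \<Rightarrow> nat set" where
  "switch_positions n B \<sigma> i = {r \<in> {1..n}. r \<notin> fst ` B \<and> r \<noteq> i \<and> r \<noteq> \<sigma> i \<and> \<sigma> r \<noteq> i}"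

lemma card_switch_positions:
  assumes "\<sigma> permutes {1..n}" "finite B"
  shows "n - card B - 3 \<le> card (switch_positions n B \<sigma> i)"
proof -
  have "\<sigma> r = i \<longleftrightarrow> r = inv \<sigma> i" for r
    using permutes_inv_eq[OF assms(1)] by metis
  then have eq: "switch_positions n B \<sigma> i = {1..n} - fst ` B - {i, \<sigma> i, inv \<sigma> i}"
    unfolding switch_positions_def by blast
  have "n - card B \<le> card ({1..n} - fst ` B)"
    using diff_card_le_card_Diff[of "fst ` B" "{1..n}"] card_image_le[OF assms(2), of fst] assms(2)
    by simp
  moreover have "card ({1..n} - fst ` B) - card {i, \<sigma> i, inv \<sigma> i}
      \<le> card ({1..n} - fst ` B - {i, \<sigma> i, inv \<sigma> i})"
    by (rule diff_card_le_card_Diff) auto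
  moreover have "card {i, \<sigma> i, inv \<sigma> i} \<le> 3"
    by (simp add: card_insert_le_m1)
  ultimately show ?thesis
    unfolding eq by linarith
qed

lemma switch_in_derangement_perms:
  assumes "\<sigma> \<in> derangement_perms n" "i \<in> {1..n}" "r \<in> switch_positions n B \<sigma> i"
  shows "\<sigma> \<circ> transpose i r \<in> derangement_perms n"
  using assms permutes_compose[OF permutes_swap_id[of i "{1..n}" r]]
  by (auto simp: derangement_perms_def switch_positions_def transpose_def)

lemma graph_on_switch_contains:
  assumes "B \<subseteq> graph_on n \<sigma>" "i \<notin> fst ` B" "r \<notin> fst ` B"
  shows "B \<subseteq> graph_on n (\<sigma> \<circ> transpose i r)"
proof
  fix b
  assume "b \<in> B"
  moreover obtain x y where "b = (x, y)"
    by (cases b)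
  ultimately show "b \<in> graph_on n (\<sigma> \<circ> transpose i r)"
    using assms by (force simp: mem_graph_on_iff transpose_def)
qed

lemma count_containing_insert_le:
  assumes "finite B" "(i, j) \<notin> B"
  shows "(n - card B) * count_containing n (insert (i, j) B) \<le> 3 * count_containing n B"
proof -
  define S where "S = {\<sigma> \<in> derangement_perms n. insert (i, j) B \<subseteq> graph_on n \<sigma>}"
  define T where "T = {\<sigma> \<in> derangement_perms n. B \<subseteq> graph_on n \<sigma> \<and> \<sigma> i \<noteq> j}"
  define P where "P \<sigma> = switch_positions n B \<sigma> i" for \<sigma>
  have finite: "finite S" "finite T"
    using finite_derangement_perms by (auto simp: S_def T_def)
  have S_T: "card S + card T \<le> count_containing n B"
    unfolding count_containing_def using finite
    by (subst card_Un_disjoint[symmetric])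
       (auto simp: S_def T_def mem_graph_on_iff intro!: card_mono finite_subset[OF _ finite_derangement_perms])
  have "card S * (n - card B - 3) \<le> card T"
  proof (rule card_mult_le_card_if_inj_on_Sigma[where f = "\<lambda>(\<sigma>, r). \<sigma> \<circ> transpose i r"])
    show "finite (P \<sigma>)" "n - card B - 3 \<le> card (P \<sigma>)" if "\<sigma> \<in> S" for \<sigma>
      using that card_switch_positions[OF _ assms(1)]
      by (auto simp: S_def P_def derangement_perms_def switch_positions_def)
    show "inj_on (\<lambda>(\<sigma>, r). \<sigma> \<circ> transpose i r) (Sigma S P)"
    proof (rule inj_onI, clarify)
      fix \<sigma> r \<tau> r'
      assume "\<sigma> \<in> S" "r \<in> P \<sigma>" "\<tau> \<in> S" "r' \<in> P \<tau>" "\<sigma> \<circ> transpose i r = \<tau> \<circ> transpose i r'"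
      moreover from \<open>\<sigma> \<in> S\<close> have "inj \<sigma>"
        by (auto simp: S_def derangement_perms_def intro: permutes_inj)
      ultimately show "\<sigma> = \<tau> \<and> r = r'"
        using compose_transpose_cancel[of \<sigma> i \<tau> r r']
        by (simp add: S_def P_def switch_positions_def mem_graph_on_iff)
    qed
    show "(\<lambda>(\<sigma>, r). \<sigma> \<circ> transpose i r) ` Sigma S P \<subseteq> T"
    proof clarify
      fix \<sigma> r
      assume "\<sigma> \<in> S" and r: "r \<in> P \<sigma>"
      then have \<sigma>: "\<sigma> \<in> derangement_perms n" "B \<subseteq> graph_on n \<sigma>" "i \<in> {1..n}" "\<sigma> i = j"
          "i \<notin> fst ` B"
        using notin_fst_if_insert_subset_graph_on[OF _ assms(2)] by (auto simp: S_def mem_graph_on_iff)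
      have "\<sigma> \<circ> transpose i r \<in> derangement_perms n"
        using switch_in_derangement_perms[OF \<sigma>(1,3)] r by (simp add: P_def)
      moreover have "B \<subseteq> graph_on n (\<sigma> \<circ> transpose i r)"
        using graph_on_switch_contains[OF \<sigma>(2,5)] r by (simp add: P_def switch_positions_def)
      moreover have "inj \<sigma>"
        using \<sigma>(1) by (auto simp: derangement_perms_def intro: permutes_inj)
      then have "\<sigma> r \<noteq> \<sigma> i"
        using r by (simp add: P_def switch_positions_def inj_eq)
      ultimately show "(\<sigma> \<circ> transpose i r) \<in> T"
        using \<sigma>(4) by (simp add: T_def)
    qed
  qed (use finite in auto)
  moreover have "count_containing n (insert (i, j) B) = card S"
    by (simp add: count_containing_def S_def)
  ultimately show ?thesis
    using S_T by (simp add: algebra_simps diff_mult_distrib)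
qed

lemma count_containing_union_mult_le:
  assumes "finite X"
  shows "finite B \<Longrightarrow> B \<inter> X = {} \<Longrightarrow>
    count_containing n (B \<union> X) * (\<Prod>t<card X. n - card B - t) \<le> 3 ^ card X * count_containing n B"
  using assms
proof (induction X arbitrary: B rule: finite_induct)
  case empty
  then show ?case by simp
next
  case (insert x X)
  obtain i j where x: "x = (i, j)"
    by (cases x)
  have "x \<notin> B"
    using insert.prems by auto
  then have IH: "count_containing n (insert x B \<union> X) * (\<Prod>t<card X. n - Suc (card B) - t)
      \<le> 3 ^ card X * count_containing n (insert x B)"
    using insert.IH[of "insert x B"] insert.prems insert.hyps by auto
  have step: "(n - card B) * count_containing n (insert x B) \<le> 3 * count_containing n B"
    using count_containing_insert_le[of B i j n] insert.prems \<open>x \<notin> B\<close> x by simp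
  have "count_containing n (B \<union> insert x X) * (\<Prod>t<card (insert x X). n - card B - t)
      = (n - card B) * (count_containing n (insert x B \<union> X) * (\<Prod>t<card X. n - Suc (card B) - t))"
    using insert.hyps by (simp add: prod.lessThan_Suc_shift ac_simps del: prod.lessThan_Suc)
  also have "\<dots> \<le> 3 ^ card X * ((n - card B) * count_containing n (insert x B))"
    using mult_left_mono[OF IH, of "n - card B"] by (simp only: ac_simps)
  also have "\<dots> \<le> 3 ^ card (insert x X) * count_containing n B"
    using mult_left_mono[OF step, of "3 ^ card X"] insert.hyps by simp
  finally show ?case .
qed

lemma count_containing_union_mult_power_le:
  assumes "finite A" "finite X" "A \<inter> X = {}" "card X \<le> n - card A"
  shows "real (count_containing n (A \<union> X)) * (real (n - card A) / exp 1) ^ card X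
    \<le> 3 ^ card X * real (count_containing n A)"
proof -
  define N where "N = n - card A"
  define k where "k = card X"
  define c where "c = real (count_containing n (A \<union> X))"
  have "k \<le> N"
    using assms(4) by (simp add: N_def k_def)
  have "count_containing n (A \<union> X) * (\<Prod>t<k. N - t) \<le> 3 ^ k * count_containing n A"
    using count_containing_union_mult_le[OF assms(2,1)] assms(3)
    by (simp add: N_def k_def Int_commute)
  then have "c * real (\<Prod>t<k. N - t) \<le> 3 ^ k * real (count_containing n A)"
    unfolding c_def by (metis of_nat_le_iff of_nat_mult of_nat_numeral of_nat_power)
  moreover have "real (\<Prod>t<k. N - t) = (\<Prod>t<k. real N - real t)"
    using \<open>k \<le> N\<close> by (simp add: of_nat_diff)
  moreover have "c * (real N / exp 1) ^ k \<le> c * (\<Prod>t<k. real N - real t)"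
    using power_div_exp_le_falling_product[OF \<open>k \<le> N\<close>] by (simp add: c_def mult_left_mono)
  ultimately show ?thesis
    by (simp add: c_def N_def k_def)
qed

lemma count_containing_union_le:
  assumes "finite A" "A \<inter> X = {}" "4 * card A \<le> n"
  shows "real (count_containing n (A \<union> X)) \<le> (12 / real n) ^ card X * real (count_containing n A)"
proof -
  consider "infinite X" | "finite X" "n - card A < card X" | "finite X" "card X \<le> n - card A"
    by linarith
  then show ?thesis
  proof cases
    case 1
    then show ?thesis
      using count_containing_antimono[of A "A \<union> X" n] by simp
  next
    case 2
    then have "n < card (A \<union> X)"
      using assms by (simp add: card_Un_disjoint)
    then show ?thesis
      by (simp add: count_containing_eq_0)
  next
    case 3
    define k where "k = card X"
    define c where "c = real (count_containing n (A \<union> X))"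
    have "real n / 4 \<le> real (n - card A) / 3"
      using assms(3) by (simp add: of_nat_diff)
    also have "\<dots> \<le> real (n - card A) / exp 1"
      by (intro divide_left_mono exp_le) auto
    finally have "c * ((real n / 12) ^ k * 3 ^ k) \<le> c * (real (n - card A) / exp 1) ^ k"
      by (simp add: c_def power_mult_distrib[symmetric] mult_left_mono power_mono)
    also have "\<dots> \<le> 3 ^ k * real (count_containing n A)"
      using count_containing_union_mult_power_le[OF assms(1) 3(1) assms(2) 3(2)]
      by (simp add: c_def k_def mult.commute)
    finally have "c * (real n / 12) ^ k \<le> real (count_containing n A)"
      by (simp add: ac_simps)
    moreover have "k = 0" if "n = 0"
      using 3 that by (simp add: k_def)
    ultimately show ?thesis
      by (cases "n = 0") (simp_all add: c_def k_def power_divide field_simps)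
  qed
qed

theorem lemma13:
  fixes n :: nat
  shows "rq_spread ({1..n} \<times> {1..n}) (real n / 12) (real n / 4) (derangements n)"
  unfolding rq_spread_def r_spread_def
proof (intro allI impI)
  fix A X :: "(nat \<times> nat) set"
  assume A: "A \<subseteq> {1..n} \<times> {1..n} \<and> real (card A) \<le> real n / 4"
  then have "finite A"
    using finite_subset by blast
  show "real (card (restr (restr (derangements n) A) X))
      \<le> inverse (real n / 12) ^ card X * real (card (restr (derangements n) A))"
    using count_containing_union_le[OF \<open>finite A\<close>, of X n] A
    by (simp add: restr_restr card_restr_derangements)
qed

end
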